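(* Let $\beta>0$, $m\ge1$, and let $j\ne k$ and $s$ be positive integers with $\max\{jm,km\}\le s$. Fix any values of $f_2,\dots,f_s$ (so $H_s$ is fixed), let $e_1$ be a half-edge at $w_j$ in $H_s$ and $e_2$ a half-edge at $w_k$ in $H_s$, and for $t\ge s$ let $A_t$ be the block of $\Pi_{j,s}(t)$ containing $e_1$ and $B_t$ the block of $\Pi_{k,s}(t)$ containing $e_2$ (so neither is a base block). Then for all $t\ge s$, \[ \mathbb{E}[|A_t||B_t|]\le\mathbb{E}[|A_t|]\,\mathbb{E}[|B_t|]\le (t/s)^{2/(2+\beta)}\left(1+O(1/s)\right), \] where expectations are over $f_{s+1},\dots,f_t$ and the implied constant depends only on $\beta$.
   Context: Fix a real $\beta>0$ and a positive integer $m$. The random tree process $(G^n_{1,\beta})_{n\ge1}$ is defined as follows. $G^1_{1,\beta}$ consists of a single vertex $v_1$ and no edges. Given $G^n_{1,\beta}$ with vertices $v_1,\dots,v_n$ and directed edges $e_2,\dots,e_n$ (where $e_i$ is the edge whose tail is $v_i$), $G^{n+1}_{1,\beta}$ is obtained by adding a vertex $v_{n+1}$ and a directed edge $e_{n+1}$ with tail $v_{n+1}$ and head a "target vertex" determined by a random variable $f_{n+1}$, independent of $f_2,\dots,f_n$, taking values in $\Omega_{n+1}=\{(i,v):1\le i\le n\}\cup\{(i,h),(i,t):2\le i\le n\}$ with $\Pr(f_{n+1}=(i,v))=\beta/((2+\beta)n-2)$ and $\Pr(f_{n+1}=(i,h))=\Pr(f_{n+1}=(i,t))=1/((2+\beta)n-2)$.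 If $f_{n+1}=(i,v)$ the target is $v_i$ (chosen "uniformly"); if $f_{n+1}=(i,h)$ the target is the head of $e_i$, and if $f_{n+1}=(i,t)$ the target is the tail $v_i$ of $e_i$ (chosen "preferentially", by copying the head half-edge, resp. tail half-edge, of $e_i$). Consequently the target is $v_i$ with probability $(d_n(v_i)+\beta)/((2+\beta)n-2)$, where $d_n(v)$ is the degree of $v$ in $G^n_{1,\beta}$. Each edge is regarded as two half-edges, one at each endpoint; the degree of a vertex is the number of half-edges at it (loops count twice). For $t\ge1$, $H_t$ is the undirected multigraph formed from $G^t_{1,\beta}$ by identifying, for each $j<\lceil t/m\rceil$, the vertices $v_{(j-1)m+1},\dots,v_{jm}$ into one vertex $w_j$, and identifying the remaining vertices into one vertex $w_{\lceil t/m\rceil}$ (all edges kept). For a vertex $w_k$ of $H_s$ with $km\le s$ and $t\ge s$, the partition $\Pi_{k,s}(t)$ of the half-edges at $w_k$ in $H_t$ is defined inductively: $\Pi_{k,s}(s)$ consists of a singleton block for each of the $d_s(w_k)$ half-edges at $w_k$ in $H_s$ together with one additional, initially empty, "base block". For $t>s$: if the target of the edge $e_t$ added at time $t$ does not lie in $w_k$, then $\Pi_{k,s}(t)=\Pi_{k,s}(t-1)$; if it does, and it was chosen preferentially by copying a half-edge lying in a block $A$ of $\Pi_{k,s}(t-1)$, then the head half-edge of $e_t$ is added to $A$; if it was chosen uniformly, the head half-edge of $e_t$ is added to the base block. *)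

theory Defs
  imports "HOL-Probability.Probability"
begin

text \<open>Kinds of choices for the random variable f_n:
  (i,U) = uniform choice of v_i, (i,Hd) = copy head half-edge of e_i,
  (i,Tl) = copy tail half-edge of e_i.\<close>
datatype kind = U | Hd | Tl

text \<open>Sides of an edge: a half-edge is a pair (i, side) with 2 <= i, denoting
  the head resp. tail half-edge of the edge e_i.\<close>
datatype side = HeadS | TailS

definition omega :: "nat \<Rightarrow> (nat \<times> kind) set" where
  "omega n = {(i, U) | i. 1 \<le> i \<and> i < n} \<union> {(i, Hd) | i. 2 \<le> i \<and> i < n}
             \<union> {(i, Tl) | i. 2 \<le> i \<and> i < n}"

definition fweight :: "real \<Rightarrow> nat \<Rightarrow> nat \<times> kind \<Rightarrow> real" where
  "fweight \<beta> n x = (if x \<in> omega n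
      then (if snd x = U then \<beta> else 1) / ((2 + \<beta>) * real (n - 1) - 2) else 0)"

definition fdist :: "real \<Rightarrow> nat \<Rightarrow> (nat \<times> kind) pmf" where
  "fdist \<beta> n = embed_pmf (fweight \<beta> n)"

text \<open>Target vertex (index) of the edge e_n, i.e. the head of e_n, determined by f.\<close>
function tgt :: "(nat \<Rightarrow> nat \<times> kind) \<Rightarrow> nat \<Rightarrow> nat" where
  "tgt f n = (case f n of (i, Hd) \<Rightarrow> (if i < n then tgt f i else 0) | (i, _) \<Rightarrow> i)"
  by pat_completeness auto
termination
  by (relation "Wellfounded.measure snd") (auto split: prod.splits kind.splits)

declare tgt.simps [simp del]

fun hvert :: "(nat \<Rightarrow> nat \<times> kind) \<Rightarrow> nat \<times> side \<Rightarrow> nat" where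
  "hvert f (i, TailS) = i"
| "hvert f (i, HeadS) = tgt f i"

text \<open>v_i is one of the vertices identified into w_k (for k with k*m <= s <= t this is
  exactly the set of vertices of w_k in H_t).\<close>
definition in_grp :: "nat \<Rightarrow> nat \<Rightarrow> nat \<Rightarrow> bool" where
  "in_grp m k v \<longleftrightarrow> (k - 1) * m < v \<and> v \<le> k * m"

definition halfedges :: "nat \<Rightarrow> (nat \<times> side) set" where
  "halfedges t = {h. 2 \<le> fst h \<and> fst h \<le> t}"

definition halfedges_at :: "nat \<Rightarrow> nat \<Rightarrow> (nat \<Rightarrow> nat \<times> kind) \<Rightarrow> nat \<Rightarrow> (nat \<times> side) set" where
  "halfedges_at m k f t = {h \<in> halfedges t. in_grp m k (hvert f h)}"

text \<open>inblk f s e h: the half-edge h belongs to the block of Pi_{.,s}(.) containing the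
  half-edge e (e present at time s). For half-edges present at time s the blocks are
  singletons; a head half-edge of e_n (n > s) joins the block of the half-edge it copied
  (if chosen preferentially); uniformly chosen heads go to the base block; tail half-edges
  of new edges do not lie in w_k.\<close>
function inblk :: "(nat \<Rightarrow> nat \<times> kind) \<Rightarrow> nat \<Rightarrow> nat \<times> side \<Rightarrow> nat \<times> side \<Rightarrow> bool" where
  "inblk f s e h = (if fst h \<le> s then h = e else
     (case h of (n, TailS) \<Rightarrow> False
      | (n, HeadS) \<Rightarrow> (case f n of (i, U) \<Rightarrow> False
                     | (i, Hd) \<Rightarrow> (if i < n then inblk f s e (i, HeadS) else False)
                     | (i, Tl) \<Rightarrow> (if i < n then inblk f s e (i, TailS) else False))))"
  by pat_completeness auto
termination
  by (relation "Wellfounded.measure (\<lambda>(f, s, e, h). fst h)") (auto split: prod.splits kind.splits)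

declare inblk.simps [simp del]

definition blk :: "nat \<Rightarrow> nat \<Rightarrow> nat \<Rightarrow> (nat \<Rightarrow> nat \<times> kind) \<Rightarrow> nat \<Rightarrow> nat \<times> side \<Rightarrow> (nat \<times> side) set" where
  "blk m k s f t e = {h \<in> halfedges_at m k f t. inblk f s e h}"

definition merge_seq :: "nat \<Rightarrow> (nat \<Rightarrow> nat \<times> kind) \<Rightarrow> (nat \<Rightarrow> nat \<times> kind) \<Rightarrow> nat \<Rightarrow> nat \<times> kind" where
  "merge_seq s f0 g n = (if n \<le> s then f0 n else g n)"

definition future :: "real \<Rightarrow> nat \<Rightarrow> nat \<Rightarrow> (nat \<Rightarrow> nat \<times> kind) pmf" where
  "future \<beta> s t = Pi_pmf {s<..t} (0, U) (fdist \<beta>)"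

lemma pmf_fdist:
  assumes "\<beta> > 0" "n \<ge> 2"
  shows "pmf (fdist \<beta> n) x = fweight \<beta> n x"
  unfolding fdist_def
proof (rule pmf_embed_pmf)
  have den: "(2 + \<beta>) * real (n - 1) - 2 > 0"
  proof -
    have "real (n - 1) \<ge> 1" using assms by simp
    hence "(2 + \<beta>) * real (n - 1) \<ge> (2 + \<beta>) * 1" using assms
      by (intro mult_left_mono) auto
    hence "(2 + \<beta>) * real (n - 1) \<ge> 2 + \<beta>" by simp
    thus ?thesis using assms by linarith
  qed
  show "\<And>x. 0 \<le> fweight \<beta> n x" using den assms by (auto simp: fweight_def)
  have fin: "finite (omega n)" unfolding omega_def
  proof -
    have "{(i, U) | i. 1 \<le> i \<and> i < n} = (\<lambda>i. (i,U)) ` {1..<n}" by auto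
    moreover have "{(i, Hd) | i. 2 \<le> i \<and> i < n} = (\<lambda>i. (i,Hd)) ` {2..<n}" by auto
    moreover have "{(i, Tl) | i. 2 \<le> i \<and> i < n} = (\<lambda>i. (i,Tl)) ` {2..<n}" by auto
    ultimately show "finite ({(i, U) | i. 1 \<le> i \<and> i < n} \<union> {(i, Hd) | i. 2 \<le> i \<and> i < n}
             \<union> {(i, Tl) | i. 2 \<le> i \<and> i < n})" by simp
  qed
  define D where "D = (2 + \<beta>) * real (n - 1) - 2"
  have D: "D > 0" using den unfolding D_def by linarith
  have "(\<integral>\<^sup>+ x. ennreal (fweight \<beta> n x) \<partial>count_space UNIV)
        = (\<Sum>x\<in>omega n. ennreal (fweight \<beta> n x))"
    by (rule nn_integral_count_space'[OF fin]) (auto simp: fweight_def)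
  also have "\<dots> = ennreal (\<Sum>x\<in>omega n. fweight \<beta> n x)"
    using den assms by (intro sum_ennreal) (auto simp: fweight_def)
  also have "(\<Sum>x\<in>omega n. fweight \<beta> n x) = 1"
  proof -
    have om: "omega n = ((\<lambda>i. (i,U)) ` {1..<n} \<union> (\<lambda>i. (i,Hd)) ` {2..<n}) \<union> (\<lambda>i. (i,Tl)) ` {2..<n}"
      unfolding omega_def by auto
    have "(\<Sum>x\<in>omega n. fweight \<beta> n x)
       = (\<Sum>x\<in>(\<lambda>i. (i,U)) ` {1..<n}. fweight \<beta> n x) + (\<Sum>x\<in>(\<lambda>i. (i,Hd)) ` {2..<n}. fweight \<beta> n x)
         + (\<Sum>x\<in>(\<lambda>i. (i,Tl)) ` {2..<n}. fweight \<beta> n x)"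
      unfolding om by (subst sum.union_disjoint, auto)+
    also have "\<dots> = real (n - 1) * (\<beta> / D) + real (n - 2) * (1 / D) + real (n - 2) * (1 / D)"
      by (subst sum.reindex, simp add: inj_on_def)+ (use assms in \<open>simp add: fweight_def omega_def D_def of_nat_diff\<close>)
    also have "\<dots> = (real (n - 1) * \<beta> + 2 * real (n - 2)) / D"
      by (simp add: add_divide_distrib)
    also have "real (n - 1) * \<beta> + 2 * real (n - 2) = D"
      unfolding D_def using assms by (simp add: of_nat_diff algebra_simps)
    also have "D / D = 1" using D by simp
    finally show ?thesis .
  qed
  finally show "(\<integral>\<^sup>+ x. ennreal (fweight \<beta> n x) \<partial>count_space UNIV) = 1" by simp
qed

end

theory Submission
  imports Defs
begin

(* Fix the history f_2..f_s and a half-edge e present at time s.  Its block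
   grows by one exactly when the new edge copies one of the block's half-edges, which for
   f_{n} happens with probability |block| / D_n, where D_n = (2+beta)(n-1) - 2.  Hence
   E[|A_n| | past] = |A_{n-1}| (1 + 1/D_n), and since two distinct blocks are disjoint
   (a new edge can join at most one of them), E[|A_n||B_n| | past] = |A_{n-1}||B_{n-1}|
   (1 + 2/D_n).  Iterating these one-step identities over the independent f_{s+1},...,f_t
   gives the exact values
     E|A_t| = E|B_t| = prod (1 + 1/D_n),   E[|A_t||B_t|] = prod (1 + 2/D_n),
   so the first inequality is  1 + 2x <= (1 + x)^2  factorwise.  For the second, a
   telescoping estimate with 1 + r/x <= (x/(x-1))^r bounds prod (1 + 1/D_n) by
   ((t-1-c)/(s-1-c))^r with r = 1/(2+beta), c = 2r, whose square is at most
   (t/s)^c (1 + C/s). *)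

section \<open>Blocks of half-edges\<close>

text \<open>The half-edges of G^t in the block of the half-edge e; unlike blk it does not
  require the half-edges to lie at w_k, which is automatic (blk_eq_block_of).\<close>
definition block_of :: "(nat \<Rightarrow> nat \<times> kind) \<Rightarrow> nat \<Rightarrow> nat \<Rightarrow> nat \<times> side \<Rightarrow> (nat \<times> side) set" where
  "block_of f s t e = {h. 2 \<le> fst h \<and> fst h \<le> t \<and> inblk f s e h}"

fun copy_of :: "nat \<times> side \<Rightarrow> nat \<times> kind" where
  "copy_of (i, HeadS) = (i, Hd)"
| "copy_of (i, TailS) = (i, Tl)"

lemma inj_copy_of: "inj copy_of"
proof (rule injI)
  fix x y :: "nat \<times> side"
  assume "copy_of x = copy_of y"
  then show "x = y" by (cases x; cases y; cases "snd x"; cases "snd y") auto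
qed

lemma copy_of_Hd: "(i, Hd) \<in> copy_of ` A \<longleftrightarrow> (i, HeadS) \<in> A"
proof
  assume "(i, Hd) \<in> copy_of ` A"
  then obtain x where "x \<in> A" "copy_of x = (i, Hd)" by auto
  then show "(i, HeadS) \<in> A" by (cases x; cases "snd x") auto
qed force

lemma copy_of_Tl: "(i, Tl) \<in> copy_of ` A \<longleftrightarrow> (i, TailS) \<in> A"
proof
  assume "(i, Tl) \<in> copy_of ` A"
  then obtain x where "x \<in> A" "copy_of x = (i, Tl)" by auto
  then show "(i, TailS) \<in> A" by (cases x; cases "snd x") auto
qed force

lemma copy_of_not_U: "y \<in> copy_of ` A \<Longrightarrow> snd y \<noteq> U"
proof (clarify)
  fix h assume "snd (copy_of h) = U"
  then show False by (cases h; cases "snd h") auto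
qed

lemma finite_block_of: "finite (block_of f s t e)"
proof -
  have "block_of f s t e \<subseteq> {0..t} \<times> {HeadS, TailS}"
    unfolding block_of_def by (auto intro: side.exhaust)
  then show ?thesis by (rule finite_subset) simp
qed

lemma copy_of_block_in_omega: "copy_of ` block_of f s t e \<subseteq> omega (Suc t)"
proof
  fix y assume "y \<in> copy_of ` block_of f s t e"
  then obtain h where "h \<in> block_of f s t e" "y = copy_of h" by auto
  then show "y \<in> omega (Suc t)" by (cases h; cases "snd h") (auto simp: block_of_def omega_def)
qed

lemma tgt_agree:
  assumes "\<And>i. i \<le> n \<Longrightarrow> f i = f' i"
  shows "tgt f n = tgt f' n"
  using assms
proof (induction n rule: less_induct)
  case (less n)
  obtain i k where ik: "f n = (i, k)" "f' n = (i, k)" using less.prems by (metis order_refl surj_pair)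
  have "i < n \<Longrightarrow> tgt f i = tgt f' i" using less by (intro less.IH) auto
  then show ?case using ik by (cases k) (simp_all add: tgt.simps[of f n] tgt.simps[of f' n])
qed

lemma inblk_agree:
  assumes "\<And>i. s < i \<Longrightarrow> i \<le> fst h \<Longrightarrow> f i = f' i"
  shows "inblk f s e h = inblk f' s e h"
  using assms
proof (induction "fst h" arbitrary: h rule: less_induct)
  case less
  obtain n sd where h: "h = (n, sd)" by fastforce
  show ?case
  proof (cases "n \<le> s")
    case True
    then show ?thesis unfolding h by (simp add: inblk.simps[of _ s e "(n, sd)"])
  next
    case False
    obtain i k where ik: "f n = (i, k)" "f' n = (i, k)" using less.prems False h
      by (metis fst_conv not_le order_refl surj_pair)
    have "\<And>sd'. i < n \<Longrightarrow> inblk f s e (i, sd') = inblk f' s e (i, sd')"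
      using less h by (intro less.hyps) auto
    then show ?thesis using False ik unfolding h inblk.simps[of _ s e "(n, sd)"]
      by (cases sd; cases k) simp_all
  qed
qed

lemma inblk_unique:
  assumes "inblk f s e h" "inblk f s e' h"
  shows "e = e'"
  using assms
proof (induction "fst h" arbitrary: h rule: less_induct)
  case less
  obtain n sd where h: "h = (n, sd)" by fastforce
  obtain i k where ik: "f n = (i, k)" by fastforce
  have "\<And>sd'. i < n \<Longrightarrow> inblk f s e (i, sd') \<Longrightarrow> inblk f s e' (i, sd') \<Longrightarrow> e = e'"
    using less h by (intro less.hyps) auto
  then show ?case using ik less.prems unfolding h inblk.simps[of f s _ "(n, sd)"]
    by (cases sd; cases k) (auto split: if_splits)
qed

lemma block_of_disjoint: "e1 \<noteq> e2 \<Longrightarrow> block_of f s t e1 \<inter> block_of f s t e2 = {}"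
  unfolding block_of_def using inblk_unique by blast

lemma inblk_hvert:
  assumes "inblk f s e h"
  shows "hvert f h = hvert f e"
  using assms
proof (induction "fst h" arbitrary: h rule: less_induct)
  case less
  obtain n sd where h: "h = (n, sd)" by fastforce
  obtain i k where ik: "f n = (i, k)" by fastforce
  have IH: "\<And>sd'. i < n \<Longrightarrow> inblk f s e (i, sd') \<Longrightarrow> hvert f (i, sd') = hvert f e"
    using less h by (intro less.hyps) auto
  show ?case using ik IH[of HeadS] IH[of TailS] less.prems unfolding h inblk.simps[of f s e "(n, sd)"]
    by (cases sd; cases k) (auto simp: tgt.simps[of f n] split: if_splits)
qed

lemma blk_eq_block_of:
  assumes "e \<in> halfedges_at m j f s" "s \<le> t"
  shows "blk m j s f t e = block_of f s t e"
  using assms inblk_hvert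
  unfolding blk_def halfedges_at_def halfedges_def block_of_def by fastforce

lemma block_of_initial:
  assumes "2 \<le> fst e" "fst e \<le> s"
  shows "block_of f s s e = {e}"
  using assms unfolding block_of_def by (auto simp: inblk.simps[of f s e])

lemma block_of_step:
  assumes "s \<le> t" "y \<in> omega (Suc t)"
  shows "block_of (f(Suc t := y)) s (Suc t) e
       = block_of f s t e \<union> (if y \<in> copy_of ` block_of f s t e then {(Suc t, HeadS)} else {})"
proof -
  have agree: "inblk (f(Suc t := y)) s e h = inblk f s e h" if "fst h \<le> t" for h
    using that by (intro inblk_agree) auto
  obtain i k where y: "y = (i, k)" by fastforce
  have i: "i \<le> t" using assms(2) unfolding y omega_def by auto
  have new: "inblk (f(Suc t := y)) s e (Suc t, HeadS) \<longleftrightarrow> y \<in> copy_of ` block_of f s t e"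
    using assms i agree[of "(i, HeadS)"] agree[of "(i, TailS)"] copy_of_not_U[of y]
    unfolding y inblk.simps[of _ s e "(Suc t, HeadS)"]
    by (cases k) (auto simp: copy_of_Hd copy_of_Tl block_of_def omega_def)
  have "h \<in> block_of (f(Suc t := y)) s (Suc t) e \<longleftrightarrow>
        h \<in> block_of f s t e \<or> (h = (Suc t, HeadS) \<and> y \<in> copy_of ` block_of f s t e)" for h
  proof (cases "fst h \<le> t")
    case True
    then show ?thesis using agree[OF True] unfolding block_of_def by auto
  next
    case False
    obtain n sd where h: "h = (n, sd)" by fastforce
    then show ?thesis using False new assms(1) unfolding block_of_def
      by (cases sd) (auto simp: inblk.simps[of _ s e "(n, TailS)"] le_Suc_eq)
  qed
  then show ?thesis by auto
qed

lemma card_block_of_step: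
  assumes "s \<le> t" "y \<in> omega (Suc t)"
  shows "real (card (block_of (f(Suc t := y)) s (Suc t) e))
       = real (card (block_of f s t e)) + indicator (copy_of ` block_of f s t e) y"
proof -
  have "(Suc t, HeadS) \<notin> block_of f s t e" by (simp add: block_of_def)
  then show ?thesis using finite_block_of[of f s t e]
    by (simp add: block_of_step[OF assms] indicator_def)
qed

section \<open>The law of one step\<close>

definition denom :: "real \<Rightarrow> nat \<Rightarrow> real" where
  "denom \<beta> n = (2 + \<beta>) * real (n - 1) - 2"

lemma denom_pos: "\<beta> > 0 \<Longrightarrow> 2 \<le> n \<Longrightarrow> denom \<beta> n > 0"
proof -
  assume a: "\<beta> > 0" "2 \<le> n"
  have "(2 + \<beta>) * 1 \<le> (2 + \<beta>) * real (n - 1)" using a by (intro mult_left_mono) auto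
  then have "2 + \<beta> \<le> (2 + \<beta>) * real (n - 1)" by simp
  then show ?thesis using a unfolding denom_def by linarith
qed

lemma growth_factor_nonneg:
  assumes "\<beta> > 0" "1 \<le> s" "0 \<le> a"
  shows "0 \<le> (\<Prod>n\<in>{s<..t}. 1 + a / denom \<beta> n)"
proof (intro prod_nonneg)
  fix n assume "n \<in> {s<..t}"
  then show "0 \<le> 1 + a / denom \<beta> n" using assms denom_pos[of \<beta> n] by auto
qed

lemma finite_omega: "finite (omega n)"
proof -
  have "omega n \<subseteq> {0..<n} \<times> {U, Hd, Tl}" unfolding omega_def by auto
  then show ?thesis by (rule finite_subset) simp
qed

lemma fweight_nonneg: "\<beta> > 0 \<Longrightarrow> 2 \<le> n \<Longrightarrow> 0 \<le> fweight \<beta> n y"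
  using denom_pos[of \<beta> n] by (auto simp: fweight_def denom_def)

lemma set_fdist: "\<beta> > 0 \<Longrightarrow> 2 \<le> n \<Longrightarrow> set_pmf (fdist \<beta> n) \<subseteq> omega n"
  by (auto simp: set_pmf_iff pmf_fdist fweight_def split: if_splits)

lemma nn_integral_fdist:
  assumes "\<beta> > 0" "2 \<le> n" "\<And>y. 0 \<le> h y"
  shows "(\<integral>\<^sup>+y. ennreal (h y) \<partial>fdist \<beta> n) = ennreal (\<Sum>y\<in>omega n. h y * fweight \<beta> n y)"
proof -
  have "(\<integral>\<^sup>+y. ennreal (h y) \<partial>fdist \<beta> n) = (\<Sum>y\<in>omega n. ennreal (h y) * pmf (fdist \<beta> n) y)"
    using set_fdist[OF assms(1,2)] by (intro nn_integral_measure_pmf_support finite_omega) auto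
  also have "\<dots> = (\<Sum>y\<in>omega n. ennreal (h y * fweight \<beta> n y))"
    using assms by (intro sum.cong refl) (simp add: pmf_fdist ennreal_mult fweight_nonneg)
  also have "\<dots> = ennreal (\<Sum>y\<in>omega n. h y * fweight \<beta> n y)"
    using assms pmf_fdist[OF assms(1,2)] by (intro sum_ennreal) (metis mult_nonneg_nonneg pmf_nonneg)
  finally show ?thesis .
qed

text \<open>Each preferential value of f_n has probability 1 / D_n.\<close>
lemma prob_pref_set:
  assumes "P \<subseteq> omega n" "\<And>y. y \<in> P \<Longrightarrow> snd y \<noteq> U"
  shows "(\<Sum>y\<in>omega n. indicator P y * fweight \<beta> n y) = real (card P) / denom \<beta> n"
proof -
  have "(\<Sum>y\<in>omega n. indicator P y * fweight \<beta> n y) = (\<Sum>y\<in>P. fweight \<beta> n y)"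
    using assms(1) finite_omega[of n]
    by (simp add: indicator_def sum.If_cases Int_absorb1 if_distrib[of "\<lambda>x. x * _"] cong: if_cong)
  also have "\<dots> = (\<Sum>y\<in>P. 1 / denom \<beta> n)"
    using assms by (intro sum.cong) (auto simp: fweight_def denom_def)
  finally show ?thesis by simp
qed

text \<open>First and mixed moments of shifted indicators of two disjoint sets of preferential
  choices: these are the one-step laws of one block and of two blocks.\<close>
lemma fdist_indicator_moment:
  assumes "\<beta> > 0" "2 \<le> n" "a \<ge> 0" "b \<ge> 0"
    and P: "P \<subseteq> omega n" "\<And>y. y \<in> P \<Longrightarrow> snd y \<noteq> U"
    and Q: "Q \<subseteq> omega n" "\<And>y. y \<in> Q \<Longrightarrow> snd y \<noteq> U"
    and disj: "P \<inter> Q = {}"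
  shows "(\<integral>\<^sup>+y. ennreal ((a + indicator P y) * (b + indicator Q y)) \<partial>fdist \<beta> n)
       = ennreal (a * b + (a * card Q + b * card P) / denom \<beta> n)"
proof -
  let ?w = "fweight \<beta> n"
  have prod: "(a + indicator P y) * (b + indicator Q y) = a * b + a * indicator Q y + b * indicator P y"
    for y using disj by (auto simp: indicator_def algebra_simps)
  have "(\<Sum>y\<in>omega n. (a + indicator P y) * (b + indicator Q y) * ?w y)
      = a * b * (\<Sum>y\<in>omega n. ?w y) + a * (\<Sum>y\<in>omega n. indicator Q y * ?w y)
          + b * (\<Sum>y\<in>omega n. indicator P y * ?w y)"
    unfolding prod by (simp add: algebra_simps sum.distrib sum_distrib_left)
  also have "\<dots> = a * b + (a * card Q + b * card P) / denom \<beta> n"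
    using sum_pmf_eq_1[OF finite_omega set_fdist[OF assms(1,2)]]
    by (simp add: pmf_fdist[OF assms(1,2)] prob_pref_set[OF P] prob_pref_set[OF Q] add_divide_distrib)
  finally have weighted_sum: "(\<Sum>y\<in>omega n. (a + indicator P y) * (b + indicator Q y) * ?w y)
      = a * b + (a * card Q + b * card P) / denom \<beta> n" .
  have "(\<integral>\<^sup>+y. ennreal ((a + indicator P y) * (b + indicator Q y)) \<partial>fdist \<beta> n)
      = ennreal (\<Sum>y\<in>omega n. (a + indicator P y) * (b + indicator Q y) * ?w y)"
    using assms(3,4) by (intro nn_integral_fdist[OF assms(1,2)]) simp
  then show ?thesis by (simp only: weighted_sum)
qed

section \<open>Iterated expectations over the future\<close>

lemma future_Suc:
  assumes "s \<le> t"
  shows "future \<beta> s (Suc t)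
       = map_pmf (\<lambda>(y, g). g(Suc t := y)) (pair_pmf (fdist \<beta> (Suc t)) (future \<beta> s t))"
proof -
  have "{s<..Suc t} = insert (Suc t) {s<..t}" using assms by auto
  then show ?thesis unfolding future_def by (simp add: Pi_pmf_insert)
qed

lemma nn_integral_future_multiplicative:
  fixes F :: "nat \<Rightarrow> (nat \<Rightarrow> nat \<times> kind) \<Rightarrow> ennreal"
  assumes "s \<le> t"
    and base: "\<And>g. F s g = x"
    and step: "\<And>n g. s \<le> n \<Longrightarrow>
                 (\<integral>\<^sup>+y. F (Suc n) (g(Suc n := y)) \<partial>fdist \<beta> (Suc n)) = F n g * q (Suc n)"
  shows "(\<integral>\<^sup>+g. F t g \<partial>future \<beta> s t) = x * (\<Prod>n\<in>{s<..t}. q n)"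
  using assms(1)
proof (induction t rule: nat_induct_at_least)
  case base
  show ?case using assms(2) by (simp add: measure_pmf.emeasure_space_1)
next
  case (Suc t)
  have "(\<integral>\<^sup>+g. F (Suc t) g \<partial>future \<beta> s (Suc t))
      = (\<integral>\<^sup>+g. (\<integral>\<^sup>+y. F (Suc t) (g(Suc t := y)) \<partial>fdist \<beta> (Suc t)) \<partial>future \<beta> s t)"
    unfolding future_Suc[OF Suc.hyps]
    by (subst pair_commute_pmf) (simp add: nn_integral_pair_pmf' case_prod_beta)
  also have "\<dots> = (\<integral>\<^sup>+g. F t g * q (Suc t) \<partial>future \<beta> s t)"
    by (simp add: step[OF Suc.hyps])
  also have "\<dots> = x * (\<Prod>n\<in>{s<..t}. q n) * q (Suc t)"
    by (simp add: nn_integral_multc Suc.IH)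
  also have "\<dots> = x * (\<Prod>n\<in>insert (Suc t) {s<..t}. q n)"
    by (simp add: mult.assoc mult.left_commute mult.commute)
  also have "insert (Suc t) {s<..t} = {s<..Suc t}" using Suc.hyps by auto
  finally show ?case .
qed

lemma merge_seq_upd: "s < n \<Longrightarrow> merge_seq s f0 (g(n := y)) = (merge_seq s f0 g)(n := y)"
  by (auto simp: merge_seq_def fun_eq_iff)

lemma expectation_eq_of_nn_integral:
  fixes M :: "'a pmf"
  assumes "\<And>g. 0 \<le> F g" "(\<integral>\<^sup>+g. ennreal (F g) \<partial>M) = ennreal x" "0 \<le> x"
  shows "measure_pmf.expectation M F = x"
  using assms by (subst integral_eq_nn_integral) auto

section \<open>The exact moments\<close>

lemma block_step_expectation:
  assumes "\<beta> > 0" "1 \<le> s" "s \<le> n"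
  shows "(\<integral>\<^sup>+y. ennreal (real (card (block_of (f(Suc n := y)) s (Suc n) e))) \<partial>fdist \<beta> (Suc n))
       = ennreal (real (card (block_of f s n e))) * ennreal (1 + 1 / denom \<beta> (Suc n))"
proof -
  let ?P = "copy_of ` block_of f s n e"
  have "card ?P = card (block_of f s n e)"
    by (rule card_image[OF inj_on_subset[OF inj_copy_of subset_UNIV]])
  then have "(\<integral>\<^sup>+y. ennreal ((real (card (block_of f s n e)) + indicator ?P y) * (1 + indicator {} y))
               \<partial>fdist \<beta> (Suc n))
           = ennreal (real (card (block_of f s n e)) * (1 + 1 / denom \<beta> (Suc n)))"
    using assms copy_of_block_in_omega[of f s n e]
    by (subst fdist_indicator_moment) (auto simp: copy_of_not_U distrib_left)
  moreover have "(\<integral>\<^sup>+y. ennreal (real (card (block_of (f(Suc n := y)) s (Suc n) e))) \<partial>fdist \<beta> (Suc n))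
      = (\<integral>\<^sup>+y. ennreal ((real (card (block_of f s n e)) + indicator ?P y) * (1 + indicator {} y))
               \<partial>fdist \<beta> (Suc n))"
    using set_fdist[OF assms(1), of "Suc n"] assms
    by (intro nn_integral_cong_AE) (auto simp: AE_measure_pmf_iff card_block_of_step)
  ultimately show ?thesis using denom_pos[OF assms(1), of "Suc n"] assms by (simp add: ennreal_mult)
qed

lemma block_pair_step_expectation:
  assumes "\<beta> > 0" "1 \<le> s" "s \<le> n" "e1 \<noteq> e2"
  shows "(\<integral>\<^sup>+y. ennreal (real (card (block_of (f(Suc n := y)) s (Suc n) e1))
                         * real (card (block_of (f(Suc n := y)) s (Suc n) e2))) \<partial>fdist \<beta> (Suc n))
       = ennreal (real (card (block_of f s n e1)) * real (card (block_of f s n e2)))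
         * ennreal (1 + 2 / denom \<beta> (Suc n))"
proof -
  let ?A = "block_of f s n e1" and ?B = "block_of f s n e2"
  have card_copies: "card (copy_of ` X) = card X" for X
    by (rule card_image[OF inj_on_subset[OF inj_copy_of subset_UNIV]])
  have disj: "copy_of ` ?A \<inter> copy_of ` ?B = {}"
    using block_of_disjoint[OF assms(4)] inj_copy_of by (simp add: image_Int[symmetric])
  have "(\<integral>\<^sup>+y. ennreal ((real (card ?A) + indicator (copy_of ` ?A) y)
                         * (real (card ?B) + indicator (copy_of ` ?B) y)) \<partial>fdist \<beta> (Suc n))
      = ennreal (real (card ?A) * real (card ?B) * (1 + 2 / denom \<beta> (Suc n)))"
    using assms disj copy_of_block_in_omega[of f s n e1] copy_of_block_in_omega[of f s n e2]
    by (subst fdist_indicator_moment) (auto simp: copy_of_not_U card_copies field_simps)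
  moreover have "(\<integral>\<^sup>+y. ennreal (real (card (block_of (f(Suc n := y)) s (Suc n) e1))
                         * real (card (block_of (f(Suc n := y)) s (Suc n) e2))) \<partial>fdist \<beta> (Suc n))
      = (\<integral>\<^sup>+y. ennreal ((real (card ?A) + indicator (copy_of ` ?A) y)
                         * (real (card ?B) + indicator (copy_of ` ?B) y)) \<partial>fdist \<beta> (Suc n))"
    using set_fdist[OF assms(1), of "Suc n"] assms
    by (intro nn_integral_cong_AE) (auto simp: AE_measure_pmf_iff card_block_of_step)
  ultimately show ?thesis using denom_pos[OF assms(1), of "Suc n"] assms by (simp add: ennreal_mult)
qed

lemma ennreal_growth_product:
  assumes "\<beta> > 0" "1 \<le> s" "0 \<le> a"
  shows "(\<Prod>n\<in>{s<..t}. ennreal (1 + a / denom \<beta> n)) = ennreal (\<Prod>n\<in>{s<..t}. 1 + a / denom \<beta> n)"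
proof (intro prod_ennreal)
  fix n assume "n \<in> {s<..t}"
  then show "0 \<le> 1 + a / denom \<beta> n" using assms denom_pos[of \<beta> n] by auto
qed

lemma block_moments:
  assumes "\<beta> > 0" "1 \<le> s" "s \<le> t"
    and e: "2 \<le> fst e1" "fst e1 \<le> s" "2 \<le> fst e2" "fst e2 \<le> s" "e1 \<noteq> e2"
  shows "(\<integral>\<^sup>+g. ennreal (real (card (block_of (merge_seq s f0 g) s t e1)))
                 \<partial>future \<beta> s t) = ennreal (\<Prod>n\<in>{s<..t}. 1 + 1 / denom \<beta> n)"
    and "(\<integral>\<^sup>+g. ennreal (real (card (block_of (merge_seq s f0 g) s t e1))
                         * real (card (block_of (merge_seq s f0 g) s t e2)))
                 \<partial>future \<beta> s t) = ennreal (\<Prod>n\<in>{s<..t}. 1 + 2 / denom \<beta> n)"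
proof -
  let ?f = "\<lambda>g. merge_seq s f0 g"
  have upd: "?f (g(Suc n := y)) = (?f g)(Suc n := y)" if "s \<le> n" for n g y
    using that by (intro merge_seq_upd) simp
  have "(\<integral>\<^sup>+g. ennreal (real (card (block_of (?f g) s t e1))) \<partial>future \<beta> s t)
      = 1 * (\<Prod>n\<in>{s<..t}. ennreal (1 + 1 / denom \<beta> n))"
  proof (rule nn_integral_future_multiplicative[OF assms(3)])
    fix n g assume n: "s \<le> n"
    show "(\<integral>\<^sup>+y. ennreal (real (card (block_of (?f (g(Suc n := y))) s (Suc n) e1))) \<partial>fdist \<beta> (Suc n))
        = ennreal (real (card (block_of (?f g) s n e1))) * ennreal (1 + 1 / denom \<beta> (Suc n))"
      unfolding upd[OF n] by (rule block_step_expectation[OF assms(1,2) n])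
  qed (simp add: block_of_initial e)
  then show "(\<integral>\<^sup>+g. ennreal (real (card (block_of (merge_seq s f0 g) s t e1)))
                 \<partial>future \<beta> s t) = ennreal (\<Prod>n\<in>{s<..t}. 1 + 1 / denom \<beta> n)"
    using ennreal_growth_product[OF assms(1,2), of 1] by simp
  have "(\<integral>\<^sup>+g. ennreal (real (card (block_of (?f g) s t e1)) * real (card (block_of (?f g) s t e2)))
          \<partial>future \<beta> s t) = 1 * (\<Prod>n\<in>{s<..t}. ennreal (1 + 2 / denom \<beta> n))"
  proof (rule nn_integral_future_multiplicative[OF assms(3)])
    fix n g assume n: "s \<le> n"
    show "(\<integral>\<^sup>+y. ennreal (real (card (block_of (?f (g(Suc n := y))) s (Suc n) e1))
                         * real (card (block_of (?f (g(Suc n := y))) s (Suc n) e2))) \<partial>fdist \<beta> (Suc n))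
        = ennreal (real (card (block_of (?f g) s n e1)) * real (card (block_of (?f g) s n e2)))
          * ennreal (1 + 2 / denom \<beta> (Suc n))"
      unfolding upd[OF n] by (rule block_pair_step_expectation[OF assms(1,2) n e(5)])
  qed (simp add: block_of_initial e)
  then show "(\<integral>\<^sup>+g. ennreal (real (card (block_of (merge_seq s f0 g) s t e1))
                         * real (card (block_of (merge_seq s f0 g) s t e2)))
                 \<partial>future \<beta> s t) = ennreal (\<Prod>n\<in>{s<..t}. 1 + 2 / denom \<beta> n)"
    using ennreal_growth_product[OF assms(1,2), of 2] by simp
qed

text \<open>Factorwise 1 + 2x <= (1 + x)^2: this is why the mixed moment does not exceed the
  product of the first moments.\<close>
lemma prod_double_le_square:
  fixes x :: "nat \<Rightarrow> real"
  assumes "\<And>n. n \<in> A \<Longrightarrow> 0 \<le> x n"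
  shows "(\<Prod>n\<in>A. 1 + 2 * x n) \<le> (\<Prod>n\<in>A. 1 + x n) * (\<Prod>n\<in>A. 1 + x n)"
proof -
  have "(\<Prod>n\<in>A. 1 + 2 * x n) \<le> (\<Prod>n\<in>A. (1 + x n) * (1 + x n))"
  proof (rule prod_mono)
    fix n assume "n \<in> A"
    then show "0 \<le> 1 + 2 * x n \<and> 1 + 2 * x n \<le> (1 + x n) * (1 + x n)"
      using assms[of n] by (simp add: algebra_simps)
  qed
  then show ?thesis by (simp add: prod.distrib)
qed

section \<open>The analytic bound\<close>

text \<open>The elementary estimate 1 + r/x <= (x/(x-1))^r, from ln (1 - 1/x) <= -1/x.\<close>
lemma one_plus_le_ratio_powr:
  fixes x r :: real
  assumes "1 < x" "0 \<le> r"
  shows "1 + r / x \<le> (x / (x - 1)) powr r"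
proof -
  have "ln ((x - 1) / x) \<le> (x - 1) / x - 1" by (rule ln_le_minus_one) (use assms in simp)
  also have "(x - 1) / x - 1 = - (1 / x)" using assms by (simp add: field_simps)
  finally have l: "1 / x \<le> ln (x / (x - 1))" using assms by (simp add: ln_div)
  have "1 + r / x \<le> exp (r / x)" using exp_ge_add_one_self[of "r / x"] by simp
  also have "exp (r / x) \<le> exp (r * ln (x / (x - 1)))"
    using mult_left_mono[OF l assms(2)] by simp
  also have "\<dots> = (x / (x - 1)) powr r" using assms by (simp add: powr_def mult.commute)
  finally show ?thesis .
qed

text \<open>Telescoping: since D_{n+1} = (2+beta)(n - c), the growth product is bounded by
  ((t-1-c)/(s-1-c))^r with r = 1/(2+beta) and c = 2r.\<close>
lemma growth_product_bound:
  fixes \<beta> :: real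
  defines "c \<equiv> 2 / (2 + \<beta>)" and "r \<equiv> 1 / (2 + \<beta>)"
  assumes "\<beta> > 0" "2 \<le> s" "s \<le> t"
  shows "(\<Prod>n\<in>{s<..t}. 1 + 1 / denom \<beta> n) \<le> ((real t - 1 - c) / (real s - 1 - c)) powr r"
  using assms(5)
proof (induction t rule: nat_induct_at_least)
  case base
  have "c < 1" using assms(3) by (simp add: c_def)
  then have "real s - 1 - c > 0" using assms(4) by linarith
  then show ?case by simp
next
  case (Suc t)
  have c1: "c < 1" using assms(3) by (simp add: c_def)
  have r0: "0 \<le> r" using assms(3) by (simp add: r_def)
  have x: "1 < real t - c" using Suc.hyps assms(4) c1 by linarith
  have sc: "real s - 1 - c > 0" using assms(4) c1 by linarith
  have step: "1 / denom \<beta> (Suc t) = r / (real t - c)"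
    using assms(3) by (simp add: denom_def c_def r_def field_simps)
  have P0: "0 \<le> (\<Prod>n\<in>{s<..t}. 1 + 1 / denom \<beta> n)"
    using growth_factor_nonneg[OF assms(3)] assms(4) by simp
  have "{s<..Suc t} = insert (Suc t) {s<..t}" using Suc by auto
  then have "(\<Prod>n\<in>{s<..Suc t}. 1 + 1 / denom \<beta> n)
      = (\<Prod>n\<in>{s<..t}. 1 + 1 / denom \<beta> n) * (1 + r / (real t - c))"
    using step by (simp add: mult.commute)
  also have "\<dots> \<le> ((real t - 1 - c) / (real s - 1 - c)) powr r * ((real t - c) / (real t - c - 1)) powr r"
    using Suc.IH one_plus_le_ratio_powr[OF x r0] P0 r0 x by (intro mult_mono) auto
  also have "\<dots> = ((real t - 1 - c) / (real s - 1 - c) * ((real t - c) / (real t - c - 1))) powr r"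
    using x sc by (subst powr_mult) auto
  also have "(real t - 1 - c) / (real s - 1 - c) * ((real t - c) / (real t - c - 1))
      = (real (Suc t) - 1 - c) / (real s - 1 - c)"
  proof -
    have eqs: "real t - c - 1 = real t - 1 - c" "real (Suc t) - 1 - c = real t - c" by auto
    have "real t - 1 - c \<noteq> 0" using x by auto
    then show ?thesis unfolding eqs by simp
  qed
  finally show ?case .
qed

text \<open>Squaring: ((t-1-c)/(s-1-c))^{2r} <= (t/s)^c (1 + C/s) with C = 2(1+c)/(1-c),
  i.e. C = 2(4+beta)/beta, using c < 1 and s >= 2.\<close>
lemma squared_growth_bound:
  fixes \<beta> Q :: real
  defines "c \<equiv> 2 / (2 + \<beta>)" and "r \<equiv> 1 / (2 + \<beta>)" and "C \<equiv> 2 * (4 + \<beta>) / \<beta>"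
  assumes "\<beta> > 0" "2 \<le> s" "s \<le> t" "0 \<le> Q" "Q \<le> ((real t - 1 - c) / (real s - 1 - c)) powr r"
  shows "Q * Q \<le> (real t / real s) powr c * (1 + C / real s)"
proof -
  have c1: "c < 1" "0 < c" using assms(4) by (simp_all add: c_def)
  have r0: "0 \<le> r" "r + r = c" using assms(4) by (simp_all add: r_def c_def)
  have s2: "real s \<ge> 2" using assms(5) by simp
  have sc: "real s - 1 - c > 0" using s2 c1 by linarith
  let ?B = "(real t - 1 - c) / (real s - 1 - c)"
  have B0: "0 \<le> ?B" using sc assms(6) by simp
  have "1 + c = (4 + \<beta>) / (2 + \<beta>)" "1 - c = \<beta> / (2 + \<beta>)"
    using assms(4) by (simp_all add: c_def field_simps)
  then have C_eq: "C = 2 * (1 + c) / (1 - c)" using assms(4) by (simp add: C_def)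
  have ratio: "real s / (real s - 1 - c) \<le> 1 + C / real s"
  proof -
    have "(1 - c) * real s \<le> 2 * (real s - 1 - c)"
      using mult_right_mono[OF s2, of "1 + c"] c1 by (simp add: algebra_simps)
    then have "real s \<le> 2 * (real s - 1 - c) / (1 - c)"
      using c1 by (simp add: pos_le_divide_eq mult.commute)
    then have "(1 + c) * real s \<le> (1 + c) * (2 * (real s - 1 - c) / (1 - c))"
      using c1 by (intro mult_left_mono) auto
    also have "\<dots> = C * (real s - 1 - c)"
      using C_eq by (simp add: algebra_simps)
    finally show ?thesis using sc s2 by (simp add: field_simps)
  qed
  have "Q * Q \<le> ?B powr r * ?B powr r" using assms(7,8) by (intro mult_mono) auto
  also have "\<dots> = ?B powr c" using r0 by (simp add: powr_add[symmetric])
  also have "\<dots> \<le> (real t / (real s - 1 - c)) powr c"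
    using B0 sc c1 by (intro powr_mono2) (auto simp: divide_right_mono)
  also have "\<dots> = (real t / real s) powr c * (real s / (real s - 1 - c)) powr c"
    using sc s2 by (simp add: powr_mult[symmetric])
  also have "(real s / (real s - 1 - c)) powr c \<le> (real s / (real s - 1 - c)) powr 1"
    using sc c1 by (intro powr_mono) (auto simp: field_simps)
  also have "\<dots> \<le> 1 + C / real s" using ratio sc s2 by simp
  finally show ?thesis by (simp add: mult_left_mono)
qed

lemma halfedges_at_merge_seq: "halfedges_at m j (merge_seq s f0 g) s = halfedges_at m j f0 s"
proof -
  have "hvert (merge_seq s f0 g) h = hvert f0 h" if "fst h \<le> s" for h
  proof -
    obtain n sd where h: "h = (n, sd)" by fastforce
    have "tgt (merge_seq s f0 g) n = tgt f0 n"
      using that h by (intro tgt_agree) (auto simp: merge_seq_def)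
    then show ?thesis using h by (cases sd) auto
  qed
  then show ?thesis unfolding halfedges_at_def halfedges_def by auto
qed

text \<open>Distinct groups w_j, w_k share no vertex, so e1 and e2 are distinct half-edges.\<close>
lemma in_grp_unique:
  assumes "in_grp m j v" "in_grp m k v"
  shows "j = k"
proof (rule ccontr)
  assume "j \<noteq> k"
  then consider "j < k" | "k < j" by linarith
  then show False
  proof cases
    case 1
    then have "j * m \<le> (k - 1) * m" by (intro mult_right_mono) auto
    then show False using assms unfolding in_grp_def by linarith
  next
    case 2
    then have "k * m \<le> (j - 1) * m" by (intro mult_right_mono) auto
    then show False using assms unfolding in_grp_def by linarith
  qed
qed

lemma block_moment_bounds:
  fixes \<beta> :: real
  assumes "\<beta> > 0" "m \<ge> 1" "j \<ge> 1" "k \<ge> 1" "j \<noteq> k" "j * m \<le> s" "k * m \<le> s" "s \<le> t"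
    and e1: "e1 \<in> halfedges_at m j f0 s" and e2: "e2 \<in> halfedges_at m k f0 s"
  defines "EA \<equiv> measure_pmf.expectation (future \<beta> s t) (\<lambda>g. real (card (blk m j s (merge_seq s f0 g) t e1)))"
    and "EB \<equiv> measure_pmf.expectation (future \<beta> s t) (\<lambda>g. real (card (blk m k s (merge_seq s f0 g) t e2)))"
    and "EAB \<equiv> measure_pmf.expectation (future \<beta> s t)
                (\<lambda>g. real (card (blk m j s (merge_seq s f0 g) t e1)) * real (card (blk m k s (merge_seq s f0 g) t e2)))"
  shows "EAB \<le> EA * EB" and "EA * EB \<le> (real t / real s) powr (2 / (2 + \<beta>)) * (1 + 2 * (4 + \<beta>) / \<beta> / real s)"
proof -
  have "j \<le> j * m" "k \<le> k * m" using assms(2) by simp_all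
  then have s2: "2 \<le> s" and s1: "1 \<le> s" using assms(3-7) by linarith+
  have fst_e1: "2 \<le> fst e1" "fst e1 \<le> s" and fst_e2: "2 \<le> fst e2" "fst e2 \<le> s"
    using e1 e2 unfolding halfedges_at_def halfedges_def by auto
  have ne: "e1 \<noteq> e2" using e1 e2 assms(5) in_grp_unique unfolding halfedges_at_def by blast
  note moments = block_moments[OF assms(1) s1 assms(8) fst_e1 fst_e2 ne, of f0]
    block_moments(1)[OF assms(1) s1 assms(8) fst_e2 fst_e1 ne[symmetric], of f0]
  define Q1 where "Q1 = (\<Prod>n\<in>{s<..t}. 1 + 1 / denom \<beta> n)"
  define Q2 where "Q2 = (\<Prod>n\<in>{s<..t}. 1 + 2 / denom \<beta> n)"
  have blk: "blk m j s (merge_seq s f0 g) t e1 = block_of (merge_seq s f0 g) s t e1"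
    "blk m k s (merge_seq s f0 g) t e2 = block_of (merge_seq s f0 g) s t e2" for g
    using e1 e2 assms(8) by (simp_all add: blk_eq_block_of halfedges_at_merge_seq)
  have "0 \<le> Q1" "0 \<le> Q2" using growth_factor_nonneg[OF assms(1) s1] by (simp_all add: Q1_def Q2_def)
  then have EA: "EA = Q1" and EB: "EB = Q1" and EAB: "EAB = Q2"
    unfolding EA_def EB_def EAB_def blk Q1_def Q2_def
    by (auto intro!: expectation_eq_of_nn_integral moments)
  have "Q2 \<le> Q1 * Q1"
    unfolding Q1_def Q2_def
  proof (rule prod_double_le_square[of "{s<..t}" "\<lambda>n. 1 / denom \<beta> n", simplified])
    fix n assume "s < n \<and> n \<le> t"
    then show "0 \<le> denom \<beta> n" using denom_pos[OF assms(1), of n] s2 by simp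
  qed
  then show "EAB \<le> EA * EB" unfolding EA EB EAB .
  show "EA * EB \<le> (real t / real s) powr (2 / (2 + \<beta>)) * (1 + 2 * (4 + \<beta>) / \<beta> / real s)"
    using squared_growth_bound[OF assms(1) s2 assms(8) \<open>0 \<le> Q1\<close>] growth_product_bound[OF assms(1) s2 assms(8)]
    unfolding EA EB by (simp add: Q1_def)
qed

theorem lemma5:
  fixes \<beta> :: real
  assumes "\<beta> > 0"
  shows "\<exists>C::real. \<forall>(m::nat) (j::nat) (k::nat) (s::nat) (t::nat) f0 e1 e2.
     (m \<ge> 1 \<and> j \<ge> 1 \<and> k \<ge> 1 \<and> j \<noteq> k \<and> j * m \<le> s \<and> k * m \<le> s \<and> s \<le> t
      \<and> (\<forall>n \<in> {2..s}. f0 n \<in> omega n)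
      \<and> e1 \<in> halfedges_at m j f0 s \<and> e2 \<in> halfedges_at m k f0 s) \<longrightarrow>
     (let EA = measure_pmf.expectation (future \<beta> s t)
                 (\<lambda>g. real (card (blk m j s (merge_seq s f0 g) t e1)));
          EB = measure_pmf.expectation (future \<beta> s t)
                 (\<lambda>g. real (card (blk m k s (merge_seq s f0 g) t e2)));
          EAB = measure_pmf.expectation (future \<beta> s t)
                 (\<lambda>g. real (card (blk m j s (merge_seq s f0 g) t e1))
                      * real (card (blk m k s (merge_seq s f0 g) t e2)))
      in EAB \<le> EA * EB \<and> EA * EB \<le> (real t / real s) powr (2 / (2 + \<beta>)) * (1 + C / real s))"
  using block_moment_bounds[OF assms] unfolding Let_def by (intro exI[of _ "2 * (4 + \<beta>) / \<beta>"]) blast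

end
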